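(* In the contention game with $k=2$ channels under acknowledgement-based feedback and $n\in\{2,3,4\}$ players, the anonymous protocol $f^2$ (in every slot, regardless of history, a pending player transmits on each of the two channels with probability $1/2$ and never stays idle) is an equilibrium protocol, with expected latency of each player equal to $2$, $8/3$ and $4$ for $n=2,3,4$ respectively.
   Context: Contention game: $n$ players, channel set $K=\{1,\dots,k\}$, discrete slots $t=1,2,\dots$; each player has one packet and is initially pending. In each slot a pending player chooses (possibly at random) an action in $\{0,1,\dots,k\}$ ($0$ = no transmission, $a$ = transmit on channel $a$). A lone transmitter on a channel succeeds and leaves; two or more transmitters on a channel collide and remain pending. Latency $T_i$ = slot of player $i$'s successful transmission; players minimize expected latency. Acknowledgement-based feedback: only a player who attempted transmission learns whether she succeeded; decision rules depend only on the personal action history. A protocol is a sequence of such decision rules; an anonymous protocol is used by all players and does not depend on identity. It is an equilibrium protocol if, when all players use it, no player at any slot and after any history can decrease her conditional expected latency by unilaterally deviating. *)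

theory Defs
  imports "HOL-Probability.Probability"
begin

text \<open>
A decision rule / protocol maps the personal action history of a pending
player (the list of her past actions; all past transmissions of a pending
player failed, so under acknowledgement-based feedback the action list is the
whole personal history) to a distribution over actions 0..k
(0 = idle, a = transmit on channel a).
A game state maps each player to Some h (pending, with personal history h)
or None (already succeeded).
\<close>

type_synonym protocol = "nat list \<Rightarrow> nat pmf"
type_synonym gstate = "nat \<Rightarrow> nat list option"

definition valid_protocol :: "nat \<Rightarrow> protocol \<Rightarrow> bool" where
  "valid_protocol k f \<longleftrightarrow> (\<forall>h. set_pmf (f h) \<subseteq> {0..k})"

definition init_state :: "nat \<Rightarrow> gstate" where
  "init_state n = (\<lambda>j. if j < n then Some [] else None)"

definition succeeds :: "nat \<Rightarrow> gstate \<Rightarrow> (nat \<Rightarrow> nat) \<Rightarrow> nat \<Rightarrow> bool" where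
  "succeeds k s a j \<longleftrightarrow> 1 \<le> a j \<and> a j \<le> k \<and>
      (\<forall>j'. j' \<noteq> j \<and> s j' \<noteq> None \<longrightarrow> a j' \<noteq> a j)"

definition step :: "nat \<Rightarrow> nat \<Rightarrow> (nat \<Rightarrow> protocol) \<Rightarrow> gstate \<Rightarrow> gstate pmf" where
  "step k n \<sigma> s =
     map_pmf (\<lambda>a j. case s j of None \<Rightarrow> None
                     | Some h \<Rightarrow> if succeeds k s a j then None else Some (h @ [a j]))
       (Pi_pmf {j. j < n \<and> s j \<noteq> None} 0 (\<lambda>j. \<sigma> j (the (s j))))"

primrec run :: "nat \<Rightarrow> nat \<Rightarrow> (nat \<Rightarrow> protocol) \<Rightarrow> gstate pmf \<Rightarrow> nat \<Rightarrow> gstate pmf" where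
  "run k n \<sigma> p 0 = p"
| "run k n \<sigma> p (Suc m) = bind_pmf (run k n \<sigma> p m) (step k n \<sigma>)"

definition state_at :: "nat \<Rightarrow> nat \<Rightarrow> (nat \<Rightarrow> protocol) \<Rightarrow> nat \<Rightarrow> gstate pmf" where
  "state_at k n \<sigma> t = run k n \<sigma> (return_pmf (init_state n)) t"

text \<open>Expected latency of player i: T_i = number of times u \<ge> 0 at which
player i is still pending after u slots (= slot of her success; infinite if never).\<close>
definition exp_latency :: "nat \<Rightarrow> nat \<Rightarrow> (nat \<Rightarrow> protocol) \<Rightarrow> nat \<Rightarrow> ennreal" where
  "exp_latency k n \<sigma> i =
     (\<Sum>u. ennreal (measure_pmf.prob (state_at k n \<sigma> u) {s. s i \<noteq> None}))"

definition cond_latency :: "nat \<Rightarrow> nat \<Rightarrow> (nat \<Rightarrow> protocol) \<Rightarrow> nat \<Rightarrow> nat list \<Rightarrow> ennreal" where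
  "cond_latency k n \<sigma> i h =
     of_nat (length h) +
     (\<Sum>m. ennreal (measure_pmf.prob
        (run k n \<sigma> (cond_pmf (state_at k n \<sigma> (length h)) {s. s i = Some h}) m)
        {s. s i \<noteq> None}))"

definition all_use :: "protocol \<Rightarrow> nat \<Rightarrow> protocol" where
  "all_use f = (\<lambda>j. f)"

text \<open>Player i unilaterally deviates to g from slot length h + 1 on
(before that slot she follows f).\<close>
definition deviate :: "protocol \<Rightarrow> nat \<Rightarrow> nat list \<Rightarrow> protocol \<Rightarrow> nat \<Rightarrow> protocol" where
  "deviate f i h g = (\<lambda>j. if j = i then (\<lambda>h'. if length h' < length h then f h' else g h') else f)"

definition equilibrium_protocol :: "nat \<Rightarrow> nat \<Rightarrow> protocol \<Rightarrow> bool" where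
  "equilibrium_protocol k n f \<longleftrightarrow> valid_protocol k f \<and>
     (\<forall>i<n. \<forall>h. \<forall>g. valid_protocol k g \<longrightarrow>
        measure_pmf.prob (state_at k n (all_use f) (length h)) {s. s i = Some h} > 0 \<longrightarrow>
        cond_latency k n (all_use f) i h \<le> cond_latency k n (deviate f i h g) i h)"

definition f2 :: protocol where
  "f2 = (\<lambda>h. pmf_of_set {1, 2})"

end

theory Submission
  imports Defs
begin

(*
  Write W m (f2_value below) for the expected latency of a pending player when m other players
  are pending and everybody uses f2: W 0 = 1, W 1 = 2, W 2 = 8/3, W 3 = 4 solve the one-slot
  recursion.  The potential of player i is W (number of other pending players) while i is
  pending and 0 after her success.  If all other players use f2, then whatever player i does in a
  slot, the potential is at most one plus its expectation after the slot, with equality when she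
  transmits.  Summing over slots, the potential bounds the expected remaining latency from below
  under every deviation (the boundary term vanishes because the potential is at most 4 times the
  probability of being pending) and equals it under f2.  Applied to the initial state and to
  every reachable conditional state, this gives both the latencies W (n - 1) and the equilibrium
  property.
*)

section \<open>Potentials along a run\<close>

lemma set_pmf_run_subset:
  assumes closed: "\<And>s. s \<in> S \<Longrightarrow> set_pmf (step k n \<sigma> s) \<subseteq> S"
    and "set_pmf p \<subseteq> S"
  shows "set_pmf (run k n \<sigma> p m) \<subseteq> S"
  by (induction m) (use assms in fastforce)+

lemma nn_integral_run_Suc:
  "(\<integral>\<^sup>+s. (\<integral>\<^sup>+x. V x \<partial>step k n \<sigma> s) + indicator A s \<partial>run k n \<sigma> p m)
     = emeasure (run k n \<sigma> p m) A + (\<integral>\<^sup>+x. V x \<partial>run k n \<sigma> p (Suc m))"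
  by (simp add: nn_integral_add add.commute)

lemma nn_integral_run_le_telescope:
  assumes closed: "\<And>s. s \<in> S \<Longrightarrow> set_pmf (step k n \<sigma> s) \<subseteq> S"
    and p: "set_pmf p \<subseteq> S"
    and super: "\<And>s. s \<in> S \<Longrightarrow> V s \<le> (\<integral>\<^sup>+x. V x \<partial>step k n \<sigma> s) + indicator A s"
  shows "(\<integral>\<^sup>+x. V x \<partial>p) \<le> (\<Sum>m<M. emeasure (run k n \<sigma> p m) A) + (\<integral>\<^sup>+x. V x \<partial>run k n \<sigma> p M)"
proof (induction M)
  case (Suc M)
  have "(\<integral>\<^sup>+x. V x \<partial>run k n \<sigma> p M)
      \<le> (\<integral>\<^sup>+s. (\<integral>\<^sup>+x. V x \<partial>step k n \<sigma> s) + indicator A s \<partial>run k n \<sigma> p M)"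
    using set_pmf_run_subset[OF closed p] super by (intro nn_integral_mono_AE AE_pmfI) blast
  also have "\<dots> = emeasure (run k n \<sigma> p M) A + (\<integral>\<^sup>+x. V x \<partial>run k n \<sigma> p (Suc M))"
    by (rule nn_integral_run_Suc)
  finally have "(\<Sum>m<M. emeasure (run k n \<sigma> p m) A) + (\<integral>\<^sup>+x. V x \<partial>run k n \<sigma> p M)
      \<le> (\<Sum>m<Suc M. emeasure (run k n \<sigma> p m) A) + (\<integral>\<^sup>+x. V x \<partial>run k n \<sigma> p (Suc M))"
    by (simp add: add.assoc add_left_mono)
  with Suc.IH show ?case by (rule order_trans)
qed simp

lemma nn_integral_run_ge_telescope:
  assumes closed: "\<And>s. s \<in> S \<Longrightarrow> set_pmf (step k n \<sigma> s) \<subseteq> S"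
    and p: "set_pmf p \<subseteq> S"
    and sub: "\<And>s. s \<in> S \<Longrightarrow> (\<integral>\<^sup>+x. V x \<partial>step k n \<sigma> s) + indicator A s \<le> V s"
  shows "(\<Sum>m<M. emeasure (run k n \<sigma> p m) A) + (\<integral>\<^sup>+x. V x \<partial>run k n \<sigma> p M) \<le> (\<integral>\<^sup>+x. V x \<partial>p)"
proof (induction M)
  case (Suc M)
  have "emeasure (run k n \<sigma> p M) A + (\<integral>\<^sup>+x. V x \<partial>run k n \<sigma> p (Suc M))
      = (\<integral>\<^sup>+s. (\<integral>\<^sup>+x. V x \<partial>step k n \<sigma> s) + indicator A s \<partial>run k n \<sigma> p M)"
    by (rule nn_integral_run_Suc[symmetric])
  also have "\<dots> \<le> (\<integral>\<^sup>+x. V x \<partial>run k n \<sigma> p M)"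
    using set_pmf_run_subset[OF closed p] sub by (intro nn_integral_mono_AE AE_pmfI) blast
  finally have "(\<Sum>m<Suc M. emeasure (run k n \<sigma> p m) A) + (\<integral>\<^sup>+x. V x \<partial>run k n \<sigma> p (Suc M))
      \<le> (\<Sum>m<M. emeasure (run k n \<sigma> p m) A) + (\<integral>\<^sup>+x. V x \<partial>run k n \<sigma> p M)"
    by (simp add: add.assoc add_left_mono)
  then show ?case using Suc.IH by (rule order_trans)
qed simp

lemma le_suminf_ennreal_if_tail_bound:
  fixes P :: "nat \<Rightarrow> real" and c C :: ennreal
  assumes nonneg: "\<And>m. 0 \<le> P m" and "C \<noteq> \<top>"
    and bound: "\<And>M. c \<le> (\<Sum>m<M. ennreal (P m)) + C * ennreal (P M)"
  shows "c \<le> (\<Sum>m. ennreal (P m))"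
proof (cases "(\<Sum>m. ennreal (P m)) = \<top>")
  case False
  then have "summable P" using summable_suminf_not_top nonneg by blast
  then have "(\<lambda>M. ennreal (P M)) \<longlonglongrightarrow> ennreal 0"
    by (intro tendsto_ennrealI summable_LIMSEQ_zero)
  then have "(\<lambda>M. C * ennreal (P M)) \<longlonglongrightarrow> C * 0"
    using \<open>C \<noteq> \<top>\<close> by (intro tendsto_mult_ennreal) auto
  then have "(\<lambda>M. (\<Sum>m<M. ennreal (P m)) + C * ennreal (P M)) \<longlonglongrightarrow> (\<Sum>m. ennreal (P m)) + C * 0"
    by (intro tendsto_add summable_LIMSEQ summableI)
  then show ?thesis
    using bound by (intro LIMSEQ_le_const) auto
qed simp

lemma nn_integral_le_suminf_run:
  assumes closed: "\<And>s. s \<in> S \<Longrightarrow> set_pmf (step k n \<sigma> s) \<subseteq> S"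
    and p: "set_pmf p \<subseteq> S"
    and super: "\<And>s. s \<in> S \<Longrightarrow> V s \<le> (\<integral>\<^sup>+x. V x \<partial>step k n \<sigma> s) + indicator A s"
    and bounded: "\<And>s. V s \<le> C * indicator A s" and "C \<noteq> \<top>"
  shows "(\<integral>\<^sup>+x. V x \<partial>p) \<le> (\<Sum>m. ennreal (measure_pmf.prob (run k n \<sigma> p m) A))"
proof (rule le_suminf_ennreal_if_tail_bound[OF _ \<open>C \<noteq> \<top>\<close>])
  fix M
  have "(\<integral>\<^sup>+x. V x \<partial>run k n \<sigma> p M) \<le> (\<integral>\<^sup>+x. C * indicator A x \<partial>run k n \<sigma> p M)"
    using bounded by (rule nn_integral_mono)
  also have "\<dots> = C * emeasure (run k n \<sigma> p M) A"
    by (rule nn_integral_cmult_indicator) simp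
  finally have tail: "(\<integral>\<^sup>+x. V x \<partial>run k n \<sigma> p M) \<le> C * emeasure (run k n \<sigma> p M) A" .
  have "(\<integral>\<^sup>+x. V x \<partial>p) \<le> (\<Sum>m<M. emeasure (run k n \<sigma> p m) A) + (\<integral>\<^sup>+x. V x \<partial>run k n \<sigma> p M)"
    by (rule nn_integral_run_le_telescope[OF closed p super])
  also have "\<dots> \<le> (\<Sum>m<M. emeasure (run k n \<sigma> p m) A) + C * emeasure (run k n \<sigma> p M) A"
    using tail by (rule add_left_mono)
  finally show "(\<integral>\<^sup>+x. V x \<partial>p) \<le> (\<Sum>m<M. ennreal (measure_pmf.prob (run k n \<sigma> p m) A))
      + C * ennreal (measure_pmf.prob (run k n \<sigma> p M) A)"
    by (simp add: measure_pmf.emeasure_eq_measure)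
qed simp

lemma suminf_run_le_nn_integral:
  assumes closed: "\<And>s. s \<in> S \<Longrightarrow> set_pmf (step k n \<sigma> s) \<subseteq> S"
    and p: "set_pmf p \<subseteq> S"
    and sub: "\<And>s. s \<in> S \<Longrightarrow> (\<integral>\<^sup>+x. V x \<partial>step k n \<sigma> s) + indicator A s \<le> V s"
  shows "(\<Sum>m. ennreal (measure_pmf.prob (run k n \<sigma> p m) A)) \<le> (\<integral>\<^sup>+x. V x \<partial>p)"
proof (rule LIMSEQ_le_const2[OF summable_LIMSEQ[OF summableI]], intro exI allI impI)
  fix M
  have "(\<Sum>m<M. ennreal (measure_pmf.prob (run k n \<sigma> p m) A)) \<le>
      (\<Sum>m<M. emeasure (run k n \<sigma> p m) A) + (\<integral>\<^sup>+x. V x \<partial>run k n \<sigma> p M)"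
    by (simp add: measure_pmf.emeasure_eq_measure)
  also have "\<dots> \<le> (\<integral>\<^sup>+x. V x \<partial>p)"
    by (rule nn_integral_run_ge_telescope[OF closed p sub])
  finally show "(\<Sum>m<M. ennreal (measure_pmf.prob (run k n \<sigma> p m) A)) \<le> (\<integral>\<^sup>+x. V x \<partial>p)" .
qed

section \<open>Counting one channel among independent uniform choices\<close>

lemma map_pmf_card_Pi_pmf_of_set_binomial:
  assumes "finite B" "u \<noteq> v"
  shows "map_pmf (\<lambda>f. card {j \<in> B. f j = u}) (Pi_pmf B d (\<lambda>_. pmf_of_set {u, v}))
         = binomial_pmf (card B) (1/2)"
proof -
  define tr where "tr = (\<lambda>b. if b then u else v)"
  have "map_pmf tr (pmf_of_set UNIV) = pmf_of_set (tr ` UNIV)"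
    using assms(2) by (intro map_pmf_of_set_inj) (auto simp: inj_on_def tr_def)
  moreover have "tr ` UNIV = {u, v}" unfolding tr_def by (auto simp: UNIV_bool)
  ultimately have uniform: "pmf_of_set {u, v} = map_pmf tr (bernoulli_pmf (1/2))"
    by (simp add: bernoulli_pmf_half_conv_pmf_of_set)
  have "Pi_pmf B d (\<lambda>_. pmf_of_set {u, v}) =
      map_pmf (\<lambda>f x. if x \<in> B then f x else d) (Pi_pmf B v (\<lambda>_. pmf_of_set {u, v}))"
    by (rule Pi_pmf_default_swap[symmetric]) (rule assms)
  also have "Pi_pmf B v (\<lambda>_. pmf_of_set {u, v}) =
      map_pmf (\<lambda>h. tr \<circ> h) (Pi_pmf B False (\<lambda>_. bernoulli_pmf (1/2)))"
    unfolding uniform by (rule Pi_pmf_map) (auto simp: assms tr_def)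
  finally have Pi_uniform: "Pi_pmf B d (\<lambda>_. pmf_of_set {u, v}) =
      map_pmf (\<lambda>h x. if x \<in> B then tr (h x) else d) (Pi_pmf B False (\<lambda>_. bernoulli_pmf (1/2)))"
    by (simp add: pmf.map_comp o_def)
  have "map_pmf (\<lambda>f. card {j \<in> B. f j = u}) (Pi_pmf B d (\<lambda>_. pmf_of_set {u, v}))
      = map_pmf (\<lambda>h. card {j \<in> B. h j}) (Pi_pmf B False (\<lambda>_. bernoulli_pmf (1/2)))"
    unfolding Pi_uniform pmf.map_comp using assms(2)
    by (intro pmf.map_cong refl) (auto simp: tr_def intro!: arg_cong[where f=card])
  also have "\<dots> = binomial_pmf (card B) (1/2)"
    by (rule binomial_pmf_altdef'[symmetric]) (auto simp: assms)
  finally show ?thesis .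
qed

lemma nn_integral_binomial_pmf_half:
  assumes "\<And>c. 0 \<le> g c"
  shows "(\<integral>\<^sup>+c. ennreal (g c) \<partial>binomial_pmf m (1/2)) = ennreal (\<Sum>c\<le>m. g c * (m choose c) / 2 ^ m)"
proof -
  have pmf: "pmf (binomial_pmf m (1/2)) c = (m choose c) / 2 ^ m" if "c \<le> m" for c
    using that by (simp add: power_add[symmetric] power_one_over)
  have "(\<integral>\<^sup>+c. ennreal (g c) \<partial>binomial_pmf m (1/2)) = (\<Sum>c\<le>m. ennreal (g c) * ennreal (pmf (binomial_pmf m (1/2)) c))"
    by (subst nn_integral_measure_pmf_finite) auto
  also have "\<dots> = (\<Sum>c\<le>m. ennreal (g c * (m choose c) / 2 ^ m))"
    using assms pmf by (intro sum.cong refl) (simp add: ennreal_mult'[symmetric])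
  also have "\<dots> = ennreal (\<Sum>c\<le>m. g c * (m choose c) / 2 ^ m)"
    using assms by (intro sum_ennreal) auto
  finally show ?thesis .
qed

section \<open>One slot of the game\<close>

definition outcome :: "nat \<Rightarrow> gstate \<Rightarrow> (nat \<Rightarrow> nat) \<Rightarrow> gstate" where
  "outcome k s a = (\<lambda>j. case s j of None \<Rightarrow> None
                     | Some h \<Rightarrow> if succeeds k s a j then None else Some (h @ [a j]))"

lemma step_eq_map_outcome:
  "step k n \<sigma> s = map_pmf (outcome k s) (Pi_pmf {j. j < n \<and> s j \<noteq> None} 0 (\<lambda>j. \<sigma> j (the (s j))))"
  unfolding step_def outcome_def ..

definition well_formed :: "nat \<Rightarrow> gstate \<Rightarrow> bool" where
  "well_formed n s \<longleftrightarrow> (\<forall>j\<ge>n. s j = None)"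

definition pending_others :: "nat \<Rightarrow> gstate \<Rightarrow> nat \<Rightarrow> nat set" where
  "pending_others n s i = {j. j < n \<and> j \<noteq> i \<and> s j \<noteq> None}"

lemma well_formed_pending_less: "well_formed n s \<Longrightarrow> s j \<noteq> None \<Longrightarrow> j < n"
  unfolding well_formed_def by (metis not_le)

lemma finite_pending_others [simp]: "finite (pending_others n s i)"
  and self_notin_pending_others [simp]: "i \<notin> pending_others n s i"
  unfolding pending_others_def by simp_all

lemma succeeds_iff_alone:
  assumes "well_formed n s" "s j \<noteq> None"
  shows "succeeds k s a j \<longleftrightarrow> a j \<in> {1..k} \<and> {j'. j' < n \<and> s j' \<noteq> None \<and> a j' = a j} = {j}"
proof -
  have "{j'. j' < n \<and> s j' \<noteq> None \<and> a j' = a j} = {j} \<longleftrightarrow>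
      (\<forall>j'. j' \<noteq> j \<and> s j' \<noteq> None \<longrightarrow> a j' \<noteq> a j)"
    using assms well_formed_pending_less[OF assms(1)] by blast
  then show ?thesis unfolding succeeds_def by auto
qed

lemma pending_others_outcome:
  "pending_others n (outcome k s a) i = {j \<in> pending_others n s i. \<not> succeeds k s a j}"
  unfolding pending_others_def outcome_def by (auto split: option.splits)

lemma succeeds_self_iff:
  assumes "well_formed n s" "s i \<noteq> None"
  shows "succeeds k s a i \<longleftrightarrow> a i \<in> {1..k} \<and> {j \<in> pending_others n s i. a j = a i} = {}"
proof -
  have "{j'. j' < n \<and> s j' \<noteq> None \<and> a j' = a i} = insert i {j \<in> pending_others n s i. a j = a i}"
    using assms well_formed_pending_less[OF assms] unfolding pending_others_def by auto
  then show ?thesis using succeeds_iff_alone[OF assms] by auto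
qed

(* Of the l other players on channel v, those still pending after player i chose y: a lone one
   succeeds unless i collides with her. *)
definition channel_survivors :: "nat \<Rightarrow> nat \<Rightarrow> nat \<Rightarrow> nat" where
  "channel_survivors y v l = (if l = 1 \<and> y \<noteq> v then 0 else l)"

lemma card_pending_on_channel_outcome:
  fixes a :: "nat \<Rightarrow> nat"
  assumes "well_formed n s" "s i \<noteq> None" "v \<in> {1..k}"
  defines "S \<equiv> {j \<in> pending_others n s i. a j = v}"
  shows "card {j \<in> S. \<not> succeeds k s a j} = channel_survivors (a i) v (card S)"
proof -
  have alone: "succeeds k s a j \<longleftrightarrow> a i \<noteq> v \<and> S = {j}" if "j \<in> S" for j
  proof -
    have j: "s j \<noteq> None" "a j = v" "j \<noteq> i" using that unfolding S_def pending_others_def by auto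
    have "{j'. j' < n \<and> s j' \<noteq> None \<and> a j' = a j} = (if a i = v then insert i S else S)"
      using assms(2) j well_formed_pending_less[OF assms(1)] unfolding S_def pending_others_def
      by auto
    then show ?thesis using succeeds_iff_alone[OF assms(1) j(1)] assms(3) j that by auto
  qed
  show ?thesis
  proof (cases "card S = 1 \<and> a i \<noteq> v")
    case True
    then obtain j where "S = {j}" by (auto simp: card_1_singleton_iff)
    then show ?thesis using alone True by (auto simp: channel_survivors_def)
  next
    case False
    then have "{j \<in> S. \<not> succeeds k s a j} = S" using alone by auto
    then show ?thesis using False by (auto simp: channel_survivors_def)
  qed
qed

lemma well_formed_step:
  "well_formed n s \<Longrightarrow> x \<in> set_pmf (step k n \<sigma> s) \<Longrightarrow> well_formed n x"
  unfolding step_eq_map_outcome well_formed_def outcome_def by auto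

lemma step_keeps_done:
  "s i = None \<Longrightarrow> x \<in> set_pmf (step k n \<sigma> s) \<Longrightarrow> x i = None"
  unfolding step_eq_map_outcome outcome_def by auto

lemma card_pending_others_less:
  assumes "well_formed n s" "s i \<noteq> None"
  shows "card (pending_others n s i) < n"
proof -
  have "i < n" using well_formed_pending_less[OF assms] .
  have "pending_others n s i \<subseteq> {..<n} - {i}" unfolding pending_others_def by auto
  then have "card (pending_others n s i) \<le> card ({..<n} - {i})" by (intro card_mono) auto
  then show ?thesis using \<open>i < n\<close> by simp
qed

lemma well_formed_init_state: "well_formed n (init_state n)"
  by (simp add: well_formed_def init_state_def)

lemma well_formed_state_at: "set_pmf (state_at k n \<sigma> u) \<subseteq> {s. well_formed n s}"
  unfolding state_at_def using well_formed_init_state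
  by (intro set_pmf_run_subset) (auto intro: well_formed_step)

lemma length_history_state_at:
  "s \<in> set_pmf (state_at k n \<sigma> u) \<Longrightarrow> s j = Some h \<Longrightarrow> length h = u"
proof (induction u arbitrary: s h)
  case 0
  then show ?case by (simp add: state_at_def init_state_def split: if_splits)
next
  case (Suc u)
  then obtain s' a where s': "s' \<in> set_pmf (state_at k n \<sigma> u)" and "s = outcome k s' a"
    by (auto simp: state_at_def step_eq_map_outcome)
  with Suc.prems(2) obtain h' where "s' j = Some h'" "h = h' @ [a j]"
    by (auto simp: outcome_def split: option.splits if_splits)
  with Suc.IH[OF s'] show ?case by simp
qed

lemma state_at_deviate:
  "u \<le> length h \<Longrightarrow> state_at k n (deviate f i h g) u = state_at k n (all_use f) u"
proof (induction u)
  case (Suc u)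
  have step_eq: "step k n (deviate f i h g) s = step k n (all_use f) s"
    if "s \<in> set_pmf (state_at k n (all_use f) u)" for s
  proof -
    have "Pi_pmf {j. j < n \<and> s j \<noteq> None} 0 (\<lambda>j. deviate f i h g j (the (s j)))
        = Pi_pmf {j. j < n \<and> s j \<noteq> None} 0 (\<lambda>j. all_use f j (the (s j)))"
    proof (rule Pi_pmf_cong)
      fix j assume "j \<in> {j. j < n \<and> s j \<noteq> None}"
      then obtain h' where "s j = Some h'" by auto
      moreover have "length h' = u" using length_history_state_at[OF that \<open>s j = Some h'\<close>] .
      ultimately show "deviate f i h g j (the (s j)) = all_use f j (the (s j))"
        using Suc.prems by (simp add: deviate_def all_use_def)
    qed simp_all
    then show ?thesis unfolding step_def by simp
  qed
  have IH: "state_at k n (deviate f i h g) u = state_at k n (all_use f) u"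
    using Suc by simp
  have "state_at k n (deviate f i h g) (Suc u)
      = bind_pmf (state_at k n (deviate f i h g) u) (step k n (deviate f i h g))"
    by (simp add: state_at_def)
  also have "\<dots> = bind_pmf (state_at k n (all_use f) u) (step k n (all_use f))"
    unfolding IH using step_eq by (rule bind_pmf_cong[OF refl])
  also have "\<dots> = state_at k n (all_use f) (Suc u)"
    by (simp add: state_at_def)
  finally show ?case .
qed (simp add: state_at_def)

section \<open>The potential of the protocol f2\<close>

(* Only the values for m \<le> 3 are latencies; the catch-all 4 merely keeps f2_value bounded. *)
fun f2_value :: "nat \<Rightarrow> real" where
  "f2_value 0 = 1"
| "f2_value (Suc 0) = 2"
| "f2_value (Suc (Suc 0)) = 8/3"
| "f2_value _ = 4"

(* Potential of player i after a slot in which she chose y while c1 and c2 of the other pending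
   players chose channels 1 and 2. *)
definition potential_after :: "nat \<Rightarrow> nat \<Rightarrow> nat \<Rightarrow> real" where
  "potential_after y c1 c2 =
     (if y = 1 \<and> c1 = 0 \<or> y = 2 \<and> c2 = 0 then 0
      else f2_value (channel_survivors y 1 c1 + channel_survivors y 2 c2))"

definition expected_potential_after :: "nat \<Rightarrow> nat \<Rightarrow> real" where
  "expected_potential_after y m = (\<Sum>c\<le>m. potential_after y c (m - c) * (m choose c) / 2 ^ m)"

lemma f2_value_bounds: "1 \<le> f2_value m" "f2_value m \<le> 4"
  by (cases m rule: f2_value.cases; simp)+

(* The one-slot recursion that determines the values of f2_value, checked case by case. *)
lemma f2_value_le_expected_potential_after:
  assumes "m \<le> 3" "y \<le> 2"
  shows "f2_value m - 1 \<le> expected_potential_after y m"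
proof -
  have "m \<in> {0,1,2,3}" "y \<in> {0,1,2}" using assms by auto
  then show ?thesis
    by (auto simp: expected_potential_after_def potential_after_def channel_survivors_def atMost_Suc numeral_eq_Suc)
qed

lemma expected_potential_after_transmit:
  assumes "m \<le> 3" "y \<in> {1,2}"
  shows "expected_potential_after y m = f2_value m - 1"
proof -
  have "m \<in> {0,1,2,3}" using assms by auto
  then show ?thesis using assms
    by (auto simp: expected_potential_after_def potential_after_def channel_survivors_def atMost_Suc numeral_eq_Suc)
qed

definition potential :: "nat \<Rightarrow> nat \<Rightarrow> gstate \<Rightarrow> ennreal" where
  "potential n i s =
     (case s i of None \<Rightarrow> 0 | Some _ \<Rightarrow> ennreal (f2_value (card (pending_others n s i))))"

lemma potential_outcome:
  fixes a :: "nat \<Rightarrow> nat"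
  assumes wf: "well_formed n s" and pending: "s i \<noteq> None" and "a i \<le> 2"
    and others: "\<forall>j \<in> pending_others n s i. a j \<in> {1,2}"
  defines "S \<equiv> \<lambda>v. {j \<in> pending_others n s i. a j = v}"
  shows "potential n i (outcome 2 s a) = ennreal (potential_after (a i) (card (S 1)) (card (S 2)))"
proof -
  have channels: "{1..2::nat} = {1,2}" by auto
  have "pending_others n (outcome 2 s a) i =
      {j \<in> S 1. \<not> succeeds 2 s a j} \<union> {j \<in> S 2. \<not> succeeds 2 s a j}"
    unfolding pending_others_outcome S_def using others by auto
  then have "card (pending_others n (outcome 2 s a) i) =
      channel_survivors (a i) 1 (card (S 1)) + channel_survivors (a i) 2 (card (S 2))"
    using card_pending_on_channel_outcome[OF wf pending, of _ 2 a]
    by (simp add: card_Un_disjoint S_def disjoint_iff)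
  moreover have "succeeds 2 s a i \<longleftrightarrow> a i = 1 \<and> card (S 1) = 0 \<or> a i = 2 \<and> card (S 2) = 0"
    using succeeds_self_iff[OF wf pending, of 2 a] assms(3) unfolding S_def channels
    by (auto simp: le_Suc_eq numeral_eq_Suc)
  ultimately show ?thesis
    using pending unfolding potential_def potential_after_def outcome_def
    by (auto split: option.splits)
qed

lemma nn_integral_potential_outcome_uniform:
  assumes wf: "well_formed n s" and pending: "s i \<noteq> None" and "y \<le> 2"
  defines "B \<equiv> pending_others n s i"
  shows "(\<integral>\<^sup>+f. potential n i (outcome 2 s (f(i := y))) \<partial>Pi_pmf B 0 (\<lambda>_. pmf_of_set {1,2}))
      = ennreal (expected_potential_after y (card B))"
proof -
  define P where "P = Pi_pmf B 0 (\<lambda>_. pmf_of_set {1,2::nat})"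
  define card1 where "card1 f = card {j \<in> B. f j = (1::nat)}" for f
  have "potential n i (outcome 2 s (f(i := y))) = ennreal (potential_after y (card1 f) (card B - card1 f))"
    if "f \<in> set_pmf P" for f
  proof -
    have f: "\<forall>j\<in>B. f j \<in> {1,2}"
      using that by (simp add: P_def B_def set_Pi_pmf PiE_dflt_def)
    then have "{j \<in> B. f j = 2} = B - {j \<in> B. f j = 1}" by auto
    then have "card {j \<in> B. f j = 2} = card B - card1 f"
      by (simp add: card1_def card_Diff_subset B_def)
    moreover have "{j \<in> B. (f(i := y)) j = v} = {j \<in> B. f j = v}" for v
      by (auto simp: B_def)
    ultimately show ?thesis
      using potential_outcome[OF wf pending, of "f(i := y)"] f \<open>y \<le> 2\<close>
      by (simp add: B_def card1_def)
  qed
  then have "(\<integral>\<^sup>+f. potential n i (outcome 2 s (f(i := y))) \<partial>P)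
      = (\<integral>\<^sup>+c. ennreal (potential_after y c (card B - c)) \<partial>map_pmf card1 P)"
    by (auto intro!: nn_integral_cong_AE AE_pmfI)
  also have "map_pmf card1 P = binomial_pmf (card B) (1/2)"
    unfolding card1_def P_def by (rule map_pmf_card_Pi_pmf_of_set_binomial) (auto simp: B_def)
  also have "(\<integral>\<^sup>+c. ennreal (potential_after y c (card B - c)) \<partial>binomial_pmf (card B) (1/2))
      = ennreal (expected_potential_after y (card B))"
    unfolding expected_potential_after_def
    by (rule nn_integral_binomial_pmf_half)
       (auto simp: potential_after_def intro: order_trans[OF _ f2_value_bounds(1)])
  finally show ?thesis unfolding P_def .
qed

lemma nn_integral_potential_step:
  assumes wf: "well_formed n s" and si: "s i = Some h"
    and others: "\<forall>j. j \<noteq> i \<longrightarrow> \<sigma> j = f2" and valid: "set_pmf (\<sigma> i h) \<subseteq> {0..2}"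
  shows "(\<integral>\<^sup>+x. potential n i x \<partial>step 2 n \<sigma> s) =
      (\<integral>\<^sup>+y. ennreal (expected_potential_after y (card (pending_others n s i))) \<partial>\<sigma> i h)"
proof -
  define B where "B = pending_others n s i"
  have "i < n" using well_formed_pending_less[OF wf] si by simp
  then have pending: "{j. j < n \<and> s j \<noteq> None} = insert i B"
    unfolding B_def pending_others_def using si by auto
  have uniform: "Pi_pmf B 0 (\<lambda>j. \<sigma> j (the (s j))) = Pi_pmf B 0 (\<lambda>_. pmf_of_set {1,2})"
    using others by (intro Pi_pmf_cong) (auto simp: B_def pending_others_def f2_def)
  have "(\<integral>\<^sup>+x. potential n i x \<partial>step 2 n \<sigma> s) =
      (\<integral>\<^sup>+y. \<integral>\<^sup>+f. potential n i (outcome 2 s (f(i := y))) \<partial>Pi_pmf B 0 (\<lambda>_. pmf_of_set {1,2}) \<partial>\<sigma> i h)"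
    unfolding step_eq_map_outcome pending
    by (simp add: Pi_pmf_insert B_def case_prod_beta nn_integral_pair_pmf' si uniform[unfolded B_def])
  also have "\<dots> = (\<integral>\<^sup>+y. ennreal (expected_potential_after y (card B)) \<partial>\<sigma> i h)"
    using valid nn_integral_potential_outcome_uniform[OF wf] si
    by (auto simp: B_def intro!: nn_integral_cong_AE AE_pmfI)
  finally show ?thesis unfolding B_def .
qed

lemma ennreal_f2_value_split: "ennreal (f2_value m) = ennreal (f2_value m - 1) + 1"
proof -
  have "f2_value m = (f2_value m - 1) + 1" by simp
  also have "ennreal \<dots> = ennreal (f2_value m - 1) + 1"
    using f2_value_bounds(1)[of m] by (intro ennreal_plus[THEN trans]) auto
  finally show ?thesis .
qed

lemma potential_le_nn_integral_step:
  assumes "n \<le> 4" and wf: "well_formed n s"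
    and others: "\<forall>j. j \<noteq> i \<longrightarrow> \<sigma> j = f2" and valid: "valid_protocol 2 (\<sigma> i)"
  shows "potential n i s \<le> (\<integral>\<^sup>+x. potential n i x \<partial>step 2 n \<sigma> s) + indicator {s. s i \<noteq> None} s"
proof (cases "s i")
  case (Some h)
  define m where "m = card (pending_others n s i)"
  have "m \<le> 3" using card_pending_others_less[OF wf] Some \<open>n \<le> 4\<close> unfolding m_def by fastforce
  have "ennreal (f2_value m - 1) = (\<integral>\<^sup>+_. ennreal (f2_value m - 1) \<partial>\<sigma> i h)"
    by (simp add: measure_pmf.emeasure_space_1)
  also have "\<dots> \<le> (\<integral>\<^sup>+y. ennreal (expected_potential_after y m) \<partial>\<sigma> i h)"
    using valid f2_value_le_expected_potential_after[OF \<open>m \<le> 3\<close>]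
    by (intro nn_integral_mono_AE AE_pmfI ennreal_leI) (fastforce simp: valid_protocol_def)
  finally show ?thesis
    using Some nn_integral_potential_step[OF wf Some others] valid
    by (simp add: potential_def m_def ennreal_f2_value_split valid_protocol_def add_right_mono)
qed (simp add: potential_def)

lemma nn_integral_step_potential_f2:
  assumes "n \<le> 4" and wf: "well_formed n s"
  shows "(\<integral>\<^sup>+x. potential n i x \<partial>step 2 n (all_use f2) s) + indicator {s. s i \<noteq> None} s
      = potential n i s"
proof (cases "s i")
  case None
  then have "(\<integral>\<^sup>+x. potential n i x \<partial>step 2 n (all_use f2) s) = 0"
    by (auto simp: potential_def dest: step_keeps_done intro!: nn_integral_zero' AE_pmfI)
  then show ?thesis using None by (simp add: potential_def)
next
  case (Some h)
  define m where "m = card (pending_others n s i)"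
  have "m \<le> 3" using card_pending_others_less[OF wf] Some \<open>n \<le> 4\<close> unfolding m_def by fastforce
  have transmit: "set_pmf (f2 h) = {1,2}" by (simp add: f2_def)
  have "(\<integral>\<^sup>+y. ennreal (expected_potential_after y m) \<partial>f2 h) = ennreal (f2_value m - 1)"
    using expected_potential_after_transmit[OF \<open>m \<le> 3\<close>] transmit
    by (subst nn_integral_cong_AE[where v="\<lambda>_. ennreal (f2_value m - 1)"])
       (auto intro!: AE_pmfI simp: measure_pmf.emeasure_space_1)
  then show ?thesis
    using Some nn_integral_potential_step[OF wf Some, of "all_use f2"] transmit
    by (simp add: potential_def m_def ennreal_f2_value_split all_use_def)
qed

lemma potential_le_indicator: "potential n i s \<le> 4 * indicator {s. s i \<noteq> None} s"
  using f2_value_bounds(2) by (auto simp: potential_def split: option.splits) (metis ennreal_leI ennreal_numeral)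

lemma potential_init_state: "i < n \<Longrightarrow> potential n i (init_state n) = ennreal (f2_value (n - 1))"
proof -
  assume "i < n"
  then have "pending_others n (init_state n) i = {..<n} - {i}"
    unfolding pending_others_def init_state_def by auto
  then show ?thesis using \<open>i < n\<close> by (simp add: potential_def init_state_def)
qed

lemma nn_integral_potential_le_latency_sum:
  assumes "n \<le> 4" and p: "set_pmf p \<subseteq> {s. well_formed n s}"
    and others: "\<forall>j. j \<noteq> i \<longrightarrow> \<sigma> j = f2" and valid: "valid_protocol 2 (\<sigma> i)"
  shows "(\<integral>\<^sup>+x. potential n i x \<partial>p) \<le> (\<Sum>m. ennreal (measure_pmf.prob (run 2 n \<sigma> p m) {s. s i \<noteq> None}))"
  using p potential_le_nn_integral_step[OF \<open>n \<le> 4\<close> _ others valid] potential_le_indicator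
  by (intro nn_integral_le_suminf_run[where S = "{s. well_formed n s}" and C = 4])
     (auto intro: well_formed_step)

lemma latency_sum_f2_eq_nn_integral_potential:
  assumes "n \<le> 4" and p: "set_pmf p \<subseteq> {s. well_formed n s}"
  shows "(\<Sum>m. ennreal (measure_pmf.prob (run 2 n (all_use f2) p m) {s. s i \<noteq> None}))
      = (\<integral>\<^sup>+x. potential n i x \<partial>p)"
proof (rule antisym)
  show "(\<Sum>m. ennreal (measure_pmf.prob (run 2 n (all_use f2) p m) {s. s i \<noteq> None}))
      \<le> (\<integral>\<^sup>+x. potential n i x \<partial>p)"
    using p nn_integral_step_potential_f2[OF \<open>n \<le> 4\<close>]
    by (intro suminf_run_le_nn_integral[where S = "{s. well_formed n s}"])
       (auto intro: well_formed_step)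
  show "(\<integral>\<^sup>+x. potential n i x \<partial>p)
      \<le> (\<Sum>m. ennreal (measure_pmf.prob (run 2 n (all_use f2) p m) {s. s i \<noteq> None}))"
    using assms by (intro nn_integral_potential_le_latency_sum)
      (auto simp: all_use_def valid_protocol_def f2_def)
qed

lemma exp_latency_f2:
  assumes "n \<le> 4" "i < n"
  shows "exp_latency 2 n (all_use f2) i = ennreal (f2_value (n - 1))"
proof -
  have "exp_latency 2 n (all_use f2) i = (\<Sum>m. ennreal (measure_pmf.prob
      (run 2 n (all_use f2) (return_pmf (init_state n)) m) {s. s i \<noteq> None}))"
    unfolding exp_latency_def state_at_def ..
  also have "\<dots> = (\<integral>\<^sup>+x. potential n i x \<partial>return_pmf (init_state n))"
    using well_formed_init_state by (intro latency_sum_f2_eq_nn_integral_potential[OF \<open>n \<le> 4\<close>]) simp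
  also have "\<dots> = ennreal (f2_value (n - 1))"
    using potential_init_state[OF \<open>i < n\<close>] by (simp add: nn_integral_return)
  finally show ?thesis .
qed

lemma equilibrium_protocol_f2:
  assumes "n \<le> 4"
  shows "equilibrium_protocol 2 n f2"
  unfolding equilibrium_protocol_def
proof (intro conjI allI impI)
  show valid_f2: "valid_protocol 2 f2"
    by (simp add: valid_protocol_def f2_def)
  fix i h g
  assume "i < n" and "valid_protocol 2 g"
    and reachable: "0 < measure_pmf.prob (state_at 2 n (all_use f2) (length h)) {s. s i = Some h}"
  define p where "p = cond_pmf (state_at 2 n (all_use f2) (length h)) {s. s i = Some h}"
  have "measure_pmf.prob (state_at 2 n (all_use f2) (length h)) {s. s i = Some h} \<noteq> 0"
    using reachable by simp
  then have nonempty: "set_pmf (state_at 2 n (all_use f2) (length h)) \<inter> {s. s i = Some h} \<noteq> {}"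
    by (simp add: measure_pmf_zero_iff)
  have p: "set_pmf p \<subseteq> {s. well_formed n s}"
    unfolding p_def set_cond_pmf[OF nonempty] using well_formed_state_at by blast
  have "cond_latency 2 n (all_use f2) i h = of_nat (length h) + (\<integral>\<^sup>+x. potential n i x \<partial>p)"
    unfolding cond_latency_def p_def[symmetric] latency_sum_f2_eq_nn_integral_potential[OF assms p] ..
  also have "\<dots> \<le> of_nat (length h) +
      (\<Sum>m. ennreal (measure_pmf.prob (run 2 n (deviate f2 i h g) p m) {s. s i \<noteq> None}))"
  proof (rule add_left_mono, rule nn_integral_potential_le_latency_sum[OF assms p])
    show "valid_protocol 2 (deviate f2 i h g i)"
      using \<open>valid_protocol 2 g\<close> valid_f2 by (simp add: deviate_def valid_protocol_def)
  qed (simp add: deviate_def)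
  also have "\<dots> = cond_latency 2 n (deviate f2 i h g) i h"
    unfolding cond_latency_def p_def state_at_deviate[OF le_refl] ..
  finally show "cond_latency 2 n (all_use f2) i h \<le> cond_latency 2 n (deviate f2 i h g) i h" .
qed

theorem theorem3:
  shows "equilibrium_protocol 2 2 f2 \<and> equilibrium_protocol 2 3 f2 \<and> equilibrium_protocol 2 4 f2
    \<and> (\<forall>i<2. exp_latency 2 2 (all_use f2) i = 2)
    \<and> (\<forall>i<3. exp_latency 2 3 (all_use f2) i = 8/3)
    \<and> (\<forall>i<4. exp_latency 2 4 (all_use f2) i = 4)"
proof -
  have "ennreal (f2_value (2 - 1)) = 2" "ennreal (f2_value (3 - 1)) = 8/3" "ennreal (f2_value (4 - 1)) = 4"
    by (simp_all add: numeral_eq_Suc divide_ennreal[symmetric])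
  then show ?thesis
    using equilibrium_protocol_f2 exp_latency_f2 by simp
qed

end
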